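(* Let $\mathcal{I}$ be finite with $n=|\mathcal{I}|$, and let $X$ be a random variable uniformly distributed on $\mathcal{I}$. Then the answer-dependent pricing function $p(\mathbf{Q},E)=H(X)-H(X\mid\mathbf{Q}(X)=E)$, where $H$ is Shannon entropy (equivalently $p(\mathbf{Q},E)=\log n-\log|\mathcal{S}_{\mathbf{Q}}(E)|$), has no information arbitrage.
   Context: $\mathcal{I}$ is a set of database instances; queries are deterministic functions on $\mathcal{I}$; a query bundle is a finite tuple of queries from a language $\mathcal{L}$, evaluated componentwise; $B(\mathcal{L})$ is the set of bundles; $E$ ranges over $\{\mathbf{Q}(D):D\in\mathcal{I}\}$. $\mathcal{S}_{\mathbf{Q}}(E)=\{D'\in\mathcal{I}:\mathbf{Q}(D')=E\}$. $D\vdash\mathbf{Q}_2\twoheadrightarrow\mathbf{Q}_1$ means every $D'\in\mathcal{I}$ with $\mathbf{Q}_2(D')=\mathbf{Q}_2(D)$ satisfies $\mathbf{Q}_1(D')=\mathbf{Q}_1(D)$. $p$ has no information arbitrage if for every $D\in\mathcal{I}$ and $\mathbf{Q}_1,\mathbf{Q}_2\in B(\mathcal{L})$, $D\vdash\mathbf{Q}_2\twoheadrightarrow\mathbf{Q}_1$ implies $p(\mathbf{Q}_2,\mathbf{Q}_2(D))\ge p(\mathbf{Q}_1,\mathbf{Q}_1(D))$. *)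

theory Defs
  imports Complex_Main
begin

text \<open>Database instances: a finite type 'i. Queries: deterministic functions 'i => 'a.
  A query bundle is a finite tuple (list) of queries, evaluated componentwise.\<close>

definition bundle_eval :: "('i \<Rightarrow> 'a) list \<Rightarrow> 'i \<Rightarrow> 'a list" where
  "bundle_eval Qs D = map (\<lambda>q. q D) Qs"

definition bundles :: "('i \<Rightarrow> 'a) set \<Rightarrow> ('i \<Rightarrow> 'a) list set" where
  "bundles L = {Qs. set Qs \<subseteq> L}"

definition solutions :: "('i \<Rightarrow> 'a) list \<Rightarrow> 'a list \<Rightarrow> 'i set" where
  "solutions Qs E = {D'. bundle_eval Qs D' = E}"

definition determines :: "'i \<Rightarrow> ('i \<Rightarrow> 'a) list \<Rightarrow> ('i \<Rightarrow> 'a) list \<Rightarrow> bool" where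
  "determines D Q2 Q1 \<longleftrightarrow>
     (\<forall>D'. bundle_eval Q2 D' = bundle_eval Q2 D \<longrightarrow> bundle_eval Q1 D' = bundle_eval Q1 D)"

definition no_info_arbitrage ::
  "('i \<Rightarrow> 'a) set \<Rightarrow> (('i \<Rightarrow> 'a) list \<Rightarrow> 'a list \<Rightarrow> real) \<Rightarrow> bool" where
  "no_info_arbitrage L p \<longleftrightarrow>
     (\<forall>D Q1 Q2. Q1 \<in> bundles L \<longrightarrow> Q2 \<in> bundles L \<longrightarrow> determines D Q2 Q1 \<longrightarrow>
        p Q2 (bundle_eval Q2 D) \<ge> p Q1 (bundle_eval Q1 D))"

definition shannon_entropy :: "('i::finite \<Rightarrow> real) \<Rightarrow> real" where
  "shannon_entropy P = - (\<Sum>x\<in>UNIV. if P x = 0 then 0 else P x * log 2 (P x))"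

definition uniform_pmf :: "'i::finite \<Rightarrow> real" where
  "uniform_pmf x = 1 / real (card (UNIV :: 'i set))"

definition cond_pmf :: "('i::finite \<Rightarrow> 'a) list \<Rightarrow> 'a list \<Rightarrow> 'i \<Rightarrow> real" where
  "cond_pmf Qs E x =
     (if bundle_eval Qs x = E
      then uniform_pmf x / (\<Sum>y\<in>solutions Qs E. uniform_pmf y) else 0)"

definition entropy_price :: "('i::finite \<Rightarrow> 'a) list \<Rightarrow> 'a list \<Rightarrow> real" where
  "entropy_price Qs E = shannon_entropy (uniform_pmf :: 'i \<Rightarrow> real) - shannon_entropy (cond_pmf Qs E)"

end

theory Submission
  imports Defs
begin

text \<open>With X uniform, conditioning on Q(X) = E makes X uniform on the solution set
  S_Q(E), so p(Q, E) = log n - log |S_Q(E)|. If D |- Q2 ->> Q1, then every instance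
  consistent with Q2's answer is consistent with Q1's answer, i.e. S_Q2 is contained in
  S_Q1; hence Q2's price is at least Q1's, by monotonicity of log.\<close>

lemma shannon_entropy_uniform_on:
  fixes S :: "'i::finite set"
  assumes "S \<noteq> {}"
  shows "shannon_entropy (\<lambda>x. if x \<in> S then 1 / real (card S) else 0) = log 2 (real (card S))"
proof -
  define k where "k = real (card S)"
  have "k > 0" using assms by (simp add: k_def card_gt_0_iff)
  have "(\<Sum>x\<in>UNIV. if (if x \<in> S then 1 / k else 0) = 0 then 0
                    else (if x \<in> S then 1 / k else 0) * log 2 (if x \<in> S then 1 / k else 0))
      = (\<Sum>x\<in>UNIV. if x \<in> S then 1 / k * log 2 (1 / k) else 0)"
    using \<open>k > 0\<close> by (intro sum.cong) auto
  also have "\<dots> = k * (1 / k * log 2 (1 / k))"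
    by (simp add: sum.If_cases k_def)
  also have "\<dots> = - log 2 k"
    using \<open>k > 0\<close> by (simp add: log_divide)
  finally show ?thesis
    unfolding shannon_entropy_def k_def by simp
qed

lemma cond_pmf_eq:
  fixes Qs :: "('i::finite \<Rightarrow> 'a) list"
  shows "cond_pmf Qs E = (\<lambda>x. if x \<in> solutions Qs E then 1 / real (card (solutions Qs E)) else 0)"
proof
  fix x
  have "card (UNIV :: 'i set) > 0" by (simp add: card_gt_0_iff)
  moreover have "(\<Sum>y\<in>solutions Qs E. uniform_pmf y)
      = real (card (solutions Qs E)) / real (card (UNIV :: 'i set))"
    by (simp add: uniform_pmf_def)
  moreover have "x \<in> solutions Qs E \<Longrightarrow> card (solutions Qs E) > 0"
    using card_gt_0_iff by fastforce
  ultimately show "cond_pmf Qs E x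
      = (if x \<in> solutions Qs E then 1 / real (card (solutions Qs E)) else 0)"
    by (auto simp: cond_pmf_def solutions_def uniform_pmf_def)
qed

lemma shannon_entropy_uniform_pmf:
  "shannon_entropy (uniform_pmf :: 'i::finite \<Rightarrow> real) = log 2 (real (card (UNIV :: 'i set)))"
  using shannon_entropy_uniform_on[of "UNIV :: 'i set"]
  by (simp add: uniform_pmf_def[abs_def])

lemma entropy_price_eq:
  fixes Qs :: "('i::finite \<Rightarrow> 'a) list"
  assumes "solutions Qs E \<noteq> {}"
  shows "entropy_price Qs E
      = log 2 (real (card (UNIV :: 'i set))) - log 2 (real (card (solutions Qs E)))"
  unfolding entropy_price_def shannon_entropy_uniform_pmf cond_pmf_eq
  using shannon_entropy_uniform_on[OF assms] by simp

lemma in_solutions_bundle_eval: "D \<in> solutions Qs (bundle_eval Qs D)"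
  by (simp add: solutions_def)

lemma solutions_subset_if_determines:
  assumes "determines D Q2 Q1"
  shows "solutions Q2 (bundle_eval Q2 D) \<subseteq> solutions Q1 (bundle_eval Q1 D)"
proof
  fix x assume "x \<in> solutions Q2 (bundle_eval Q2 D)"
  then have "bundle_eval Q2 x = bundle_eval Q2 D" by (simp add: solutions_def)
  with assms have "bundle_eval Q1 x = bundle_eval Q1 D" unfolding determines_def by blast
  then show "x \<in> solutions Q1 (bundle_eval Q1 D)" by (simp add: solutions_def)
qed

theorem lemma7:
  fixes L :: "('i::finite \<Rightarrow> 'a) set"
  shows "no_info_arbitrage L (entropy_price :: ('i \<Rightarrow> 'a) list \<Rightarrow> 'a list \<Rightarrow> real)"
  unfolding no_info_arbitrage_def
proof (intro allI impI)
  fix D :: 'i and Q1 Q2 :: "('i \<Rightarrow> 'a) list"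
  assume "determines D Q2 Q1"
  define S1 where "S1 = solutions Q1 (bundle_eval Q1 D)"
  define S2 where "S2 = solutions Q2 (bundle_eval Q2 D)"
  have "S2 \<noteq> {}" "S1 \<noteq> {}"
    unfolding S1_def S2_def using in_solutions_bundle_eval by (metis empty_iff)+
  moreover have "card S2 \<le> card S1"
    using solutions_subset_if_determines[OF \<open>determines D Q2 Q1\<close>]
    unfolding S1_def S2_def by (intro card_mono) auto
  ultimately have "log 2 (real (card S2)) \<le> log 2 (real (card S1))"
    by (simp add: card_gt_0_iff)
  then show "entropy_price Q1 (bundle_eval Q1 D) \<le> entropy_price Q2 (bundle_eval Q2 D)"
    using entropy_price_eq[of Q1] entropy_price_eq[of Q2] \<open>S1 \<noteq> {}\<close> \<open>S2 \<noteq> {}\<close>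
    unfolding S1_def S2_def by simp
qed

end
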